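(* Let $N$ be finite, $\mathbf P$ stochastic on $N$, $0<\beta<1$, $\mathbf R\in\mathbb R^N$ and $S\subseteq N$. For every $i\in N$ and every $j\in S^c$, $$\nu_i^{S\cup\{j\}}=\nu_j^S-\frac{w_i^S}{w_i^{S\cup\{j\}}}\big(\nu_j^S-\nu_i^S\big).$$
   Context: $N$ is a finite state set, $\mathbf{P}=(p_{ij})$ stochastic, $\beta\in(0,1)$, $\mathbf R=(R_j)$; $X(t)$ the Markov chain with matrix $\mathbf P$, $\mathsf E_i$ expectation given $X(0)=i$, $S^c=N\setminus S$. For $S\subseteq N$, $\tau_S=\min\{t\ge0:X(t)\notin S\}$, $f_i^S=\mathsf{E}_i[\sum_{t=0}^{\tau_S-1}R_{X(t)}\beta^t]$, $g_i^S=\mathsf{E}_i[\sum_{t=0}^{\tau_S-1}\beta^t]$, $w_i^S=1+\beta\sum_jp_{ij}g_j^S-\beta g_i^S$ (positive), $r_i^S=R_i+\beta\sum_jp_{ij}f_j^S-\beta f_i^S$, $\nu_i^S=r_i^S/w_i^S$. *)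

theory Defs
  imports "HOL-Analysis.Analysis"
begin

text \<open>State space N is the finite type 'a (N = UNIV). A transition matrix P is
stochastic if its entries are nonnegative and its rows sum to 1.\<close>

definition stochastic :: "('a::finite \<Rightarrow> 'a \<Rightarrow> real) \<Rightarrow> bool" where
  "stochastic P \<longleftrightarrow> (\<forall>i j. 0 \<le> P i j) \<and> (\<forall>i. (\<Sum>j\<in>UNIV. P i j) = 1)"

text \<open>stay_prob P S t i k = P_i(X(0),...,X(t) all in S and X(t) = k)
   = P_i(tau_S > t, X(t) = k).\<close>

fun stay_prob :: "('a::finite \<Rightarrow> 'a \<Rightarrow> real) \<Rightarrow> 'a set \<Rightarrow> nat \<Rightarrow> 'a \<Rightarrow> 'a \<Rightarrow> real" where
  "stay_prob P S 0 i k = (if i \<in> S \<and> k = i then 1 else 0)"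
| "stay_prob P S (Suc t) i k =
     (if k \<in> S then (\<Sum>l\<in>UNIV. stay_prob P S t i l * P l k) else 0)"

text \<open>f_i^S = E_i[sum_{t<tau_S} R(X t) beta^t] = sum_t beta^t E_i[R(X t); tau_S > t].\<close>

definition fS :: "('a::finite \<Rightarrow> 'a \<Rightarrow> real) \<Rightarrow> real \<Rightarrow> ('a \<Rightarrow> real) \<Rightarrow> 'a set \<Rightarrow> 'a \<Rightarrow> real" where
  "fS P \<beta> R S i = (\<Sum>t. \<beta> ^ t * (\<Sum>k\<in>UNIV. stay_prob P S t i k * R k))"

definition gS :: "('a::finite \<Rightarrow> 'a \<Rightarrow> real) \<Rightarrow> real \<Rightarrow> 'a set \<Rightarrow> 'a \<Rightarrow> real" where
  "gS P \<beta> S i = fS P \<beta> (\<lambda>_. 1) S i"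

definition wS :: "('a::finite \<Rightarrow> 'a \<Rightarrow> real) \<Rightarrow> real \<Rightarrow> 'a set \<Rightarrow> 'a \<Rightarrow> real" where
  "wS P \<beta> S i = 1 + \<beta> * (\<Sum>j\<in>UNIV. P i j * gS P \<beta> S j) - \<beta> * gS P \<beta> S i"

definition rS :: "('a::finite \<Rightarrow> 'a \<Rightarrow> real) \<Rightarrow> real \<Rightarrow> ('a \<Rightarrow> real) \<Rightarrow> 'a set \<Rightarrow> 'a \<Rightarrow> real" where
  "rS P \<beta> R S i = R i + \<beta> * (\<Sum>j\<in>UNIV. P i j * fS P \<beta> R S j) - \<beta> * fS P \<beta> R S i"

definition nuS :: "('a::finite \<Rightarrow> 'a \<Rightarrow> real) \<Rightarrow> real \<Rightarrow> ('a \<Rightarrow> real) \<Rightarrow> 'a set \<Rightarrow> 'a \<Rightarrow> real" where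
  "nuS P \<beta> R S i = rS P \<beta> R S i / wS P \<beta> S i"

end

theory Submission
  imports Defs
begin

text \<open>Both f^S and g^S are the unique solutions of the discounted equations
  F_k = [k \<in> S] (R_k + \<beta> \<Sum>_l p_kl F_l), whose homogeneous version only has the zero
  solution since \<beta> < 1. Put c = \<nu>_j^S and replace R by R - c: this turns f^S into
  f^S - c g^S and r^S into r^S - c w^S, so the new reward has index 0 at j. But adding a
  state j of index 0 to S does not change f, since f^S then already solves the equations
  for S \<union> {j}. Hence r^{S \<union> {j}}_i - c w^{S \<union> {j}}_i = r^S_i - c w^S_i, which is the claim
  after division by w^{S \<union> {j}}_i.\<close>

definition bellman_eq ::
    "('a::finite \<Rightarrow> 'a \<Rightarrow> real) \<Rightarrow> real \<Rightarrow> ('a \<Rightarrow> real) \<Rightarrow> 'a set \<Rightarrow> ('a \<Rightarrow> real) \<Rightarrow> bool" where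
  "bellman_eq P \<beta> R S F \<longleftrightarrow>
     (\<forall>k. F k = (if k \<in> S then R k + \<beta> * (\<Sum>l\<in>UNIV. P k l * F l) else 0))"

lemma bellman_eq_diff:
  assumes "bellman_eq P \<beta> R S F" "bellman_eq P \<beta> R' S F'"
  shows "bellman_eq P \<beta> (\<lambda>k. R k - R' k) S (\<lambda>k. F k - F' k)"
  unfolding bellman_eq_def
proof
  fix k
  have "(\<Sum>l\<in>UNIV. P k l * (F l - F' l)) = (\<Sum>l\<in>UNIV. P k l * F l) - (\<Sum>l\<in>UNIV. P k l * F' l)"
    by (simp add: right_diff_distrib sum_subtractf)
  moreover have "F k = (if k \<in> S then R k + \<beta> * (\<Sum>l\<in>UNIV. P k l * F l) else 0)"
    and "F' k = (if k \<in> S then R' k + \<beta> * (\<Sum>l\<in>UNIV. P k l * F' l) else 0)"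
    using assms unfolding bellman_eq_def by blast+
  ultimately show "F k - F' k = (if k \<in> S then R k - R' k + \<beta> * (\<Sum>l\<in>UNIV. P k l * (F l - F' l)) else 0)"
    by (simp only:) (simp add: right_diff_distrib)
qed

lemma bellman_eq_scale:
  assumes "bellman_eq P \<beta> R S F"
  shows "bellman_eq P \<beta> (\<lambda>k. c * R k) S (\<lambda>k. c * F k)"
  using assms unfolding bellman_eq_def
  by (simp add: sum_distrib_left algebra_simps)

lemma stay_prob_nonneg: "stochastic P \<Longrightarrow> 0 \<le> stay_prob P S t i k"
  by (induction t arbitrary: k) (auto simp: stochastic_def intro!: sum_nonneg mult_nonneg_nonneg)

lemma stay_prob_sum_le_1:
  assumes "stochastic P"
  shows "(\<Sum>k\<in>UNIV. stay_prob P S t i k) \<le> 1"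
proof (induction t)
  case 0
  have "(\<Sum>k\<in>UNIV. stay_prob P S 0 i k) = (if i \<in> S then 1 else 0)"
    by (simp add: sum.delta)
  then show ?case by simp
next
  case (Suc t)
  have "(\<Sum>k\<in>UNIV. stay_prob P S (Suc t) i k) \<le> (\<Sum>k\<in>UNIV. \<Sum>l\<in>UNIV. stay_prob P S t i l * P l k)"
    by (rule sum_mono) (auto intro!: sum_nonneg mult_nonneg_nonneg stay_prob_nonneg assms
          simp: assms[unfolded stochastic_def])
  also have "\<dots> = (\<Sum>l\<in>UNIV. stay_prob P S t i l * (\<Sum>k\<in>UNIV. P l k))"
    by (subst sum.swap) (simp add: sum_distrib_left)
  also have "\<dots> = (\<Sum>l\<in>UNIV. stay_prob P S t i l)"
    using assms by (simp add: stochastic_def)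
  finally show ?case using Suc by simp
qed

lemma stay_prob_le_1:
  assumes "stochastic P"
  shows "stay_prob P S t i k \<le> 1"
proof -
  have "stay_prob P S t i k \<le> (\<Sum>k\<in>UNIV. stay_prob P S t i k)"
    by (rule member_le_sum) (auto intro: stay_prob_nonneg assms)
  then show ?thesis using stay_prob_sum_le_1[OF assms, of S t i] by linarith
qed

lemma stay_prob_Suc_first:
  "stay_prob P S (Suc t) i k = (if i \<in> S then (\<Sum>l\<in>UNIV. P i l * stay_prob P S t l k) else 0)"
proof (induction t arbitrary: k)
  case 0
  have last: "(\<lambda>l. stay_prob P S 0 i l * P l k) = (\<lambda>l. if l = i then (if i \<in> S then P i k else 0) else 0)"
    by auto
  have first: "(\<lambda>l. P i l * stay_prob P S 0 l k) = (\<lambda>l. if l = k then (if k \<in> S then P i k else 0) else 0)"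
    by auto
  show ?case unfolding stay_prob.simps(2) last first by simp
next
  case (Suc t)
  have "stay_prob P S (Suc (Suc t)) i k =
     (if k \<in> S then \<Sum>l\<in>UNIV. stay_prob P S (Suc t) i l * P l k else 0)" by simp
  also have "\<dots> = (if k \<in> S then \<Sum>l\<in>UNIV. (if i \<in> S then (\<Sum>m\<in>UNIV. P i m * stay_prob P S t m l) else 0) * P l k else 0)"
    using Suc by simp
  also have "\<dots> = (if i \<in> S then (\<Sum>m\<in>UNIV. P i m * stay_prob P S (Suc t) m k) else 0)"
    by (auto simp: sum_distrib_left sum_distrib_right mult.assoc intro: sum.swap)
  finally show ?case .
qed

lemma summable_discounted_stay:
  assumes "stochastic P" "\<bar>\<beta>\<bar> < 1"
  shows "summable (\<lambda>t. \<beta> ^ t * (\<Sum>k\<in>UNIV. stay_prob P S t i k * R k))"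
proof (rule summable_comparison_test)
  show "summable (\<lambda>t. (\<Sum>k\<in>UNIV. \<bar>R k\<bar>) * \<bar>\<beta>\<bar> ^ t)"
    using assms by (intro summable_mult summable_geometric) simp
  show "\<exists>N. \<forall>n\<ge>N. norm (\<beta> ^ n * (\<Sum>k\<in>UNIV. stay_prob P S n i k * R k)) \<le> (\<Sum>k\<in>UNIV. \<bar>R k\<bar>) * \<bar>\<beta>\<bar> ^ n"
  proof (intro exI allI impI)
    fix n
    have "\<bar>\<Sum>k\<in>UNIV. stay_prob P S n i k * R k\<bar> \<le> (\<Sum>k\<in>UNIV. \<bar>stay_prob P S n i k * R k\<bar>)"
      by (rule sum_abs)
    also have "\<dots> \<le> (\<Sum>k\<in>UNIV. \<bar>R k\<bar>)"
    proof (rule sum_mono)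
      fix k
      have "\<bar>stay_prob P S n i k\<bar> \<le> 1"
        using stay_prob_nonneg[OF assms(1)] stay_prob_le_1[OF assms(1)] by (simp add: abs_le_iff)
      then show "\<bar>stay_prob P S n i k * R k\<bar> \<le> \<bar>R k\<bar>"
        by (simp add: abs_mult mult_left_le_one_le)
    qed
    finally show "norm (\<beta> ^ n * (\<Sum>k\<in>UNIV. stay_prob P S n i k * R k)) \<le> (\<Sum>k\<in>UNIV. \<bar>R k\<bar>) * \<bar>\<beta>\<bar> ^ n"
      by (simp add: abs_mult power_abs mult.commute mult_left_mono)
  qed
qed

lemma bellman_eq_fS:
  assumes "stochastic P" "\<bar>\<beta>\<bar> < 1"
  shows "bellman_eq P \<beta> R S (fS P \<beta> R S)"
  unfolding bellman_eq_def
proof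
  fix i
  define a where "a t l = (\<Sum>k\<in>UNIV. stay_prob P S t l k * R k)" for t l
  have sm: "summable (\<lambda>t. \<beta> ^ t * a t l)" for l
    unfolding a_def by (rule summable_discounted_stay[OF assms])
  have a_Suc: "a (Suc t) i = (if i \<in> S then (\<Sum>l\<in>UNIV. P i l * a t l) else 0)" for t
  proof -
    have "a (Suc t) i = (if i \<in> S then (\<Sum>k\<in>UNIV. (\<Sum>l\<in>UNIV. P i l * stay_prob P S t l k) * R k) else 0)"
      unfolding a_def by (cases "i \<in> S") (simp_all del: stay_prob.simps(2) add: stay_prob_Suc_first)
    also have "\<dots> = (if i \<in> S then (\<Sum>l\<in>UNIV. P i l * a t l) else 0)"
      unfolding a_def by (simp add: sum_distrib_left sum_distrib_right mult.assoc) (rule impI, rule sum.swap)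
    finally show ?thesis .
  qed
  have a_0: "a 0 i = (if i \<in> S then R i else 0)"
  proof -
    have "(\<lambda>k. stay_prob P S 0 i k * R k) = (\<lambda>k. if k = i then (if i \<in> S then R i else 0) else 0)"
      by auto
    then show ?thesis unfolding a_def by (simp only:) simp
  qed
  have f: "fS P \<beta> R S l = (\<Sum>t. \<beta> ^ t * a t l)" for l
    unfolding fS_def a_def ..
  have "(\<Sum>t. \<beta> ^ Suc t * a (Suc t) i) = fS P \<beta> R S i - a 0 i"
    unfolding f by (subst suminf_split_head[OF sm]) simp
  moreover have "(\<Sum>t. \<beta> ^ Suc t * a (Suc t) i) =
     (if i \<in> S then \<beta> * (\<Sum>l\<in>UNIV. P i l * fS P \<beta> R S l) else 0)"
  proof (cases "i \<in> S")
    case True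
    have "(\<Sum>t. \<beta> ^ Suc t * a (Suc t) i) = (\<Sum>t. \<Sum>l\<in>UNIV. \<beta> * P i l * (\<beta> ^ t * a t l))"
      using True by (simp add: a_Suc sum_distrib_left mult_ac)
    also have "\<dots> = (\<Sum>l\<in>UNIV. \<Sum>t. \<beta> * P i l * (\<beta> ^ t * a t l))"
      by (rule suminf_sum) (intro summable_mult sm)
    also have "\<dots> = (\<Sum>l\<in>UNIV. \<beta> * P i l * fS P \<beta> R S l)"
      unfolding f by (intro sum.cong refl suminf_mult[OF sm])
    finally show ?thesis using True by (simp add: sum_distrib_left mult_ac)
  next
    case False
    then show ?thesis by (simp add: a_Suc)
  qed
  ultimately show "fS P \<beta> R S i = (if i \<in> S then R i + \<beta> * (\<Sum>l\<in>UNIV. P i l * fS P \<beta> R S l) else 0)"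
    using a_0 by (auto split: if_splits)
qed

text \<open>The maximum of |X| is attained; there it is at most |\<beta>| times itself.\<close>

lemma bellman_eq_zero_reward:
  assumes "stochastic P" "\<bar>\<beta>\<bar> < 1" and X: "bellman_eq P \<beta> (\<lambda>_. 0) S X"
  shows "X = (\<lambda>_. 0)"
proof -
  have X_eq: "X k = (if k \<in> S then \<beta> * (\<Sum>l\<in>UNIV. P k l * X l) else 0)" for k
    using X by (simp add: bellman_eq_def)
  define m where "m = Max (range (\<lambda>k. \<bar>X k\<bar>))"
  have le_m: "\<bar>X l\<bar> \<le> m" for l unfolding m_def by (rule Max_ge) auto
  have "m \<in> range (\<lambda>k. \<bar>X k\<bar>)" unfolding m_def by (rule Max_in) auto
  then obtain k0 where k0: "\<bar>X k0\<bar> = m" by auto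
  have m_nonneg: "0 \<le> m" using le_m[of k0] by linarith
  have "\<bar>X k0\<bar> \<le> \<bar>\<beta>\<bar> * m"
  proof (cases "k0 \<in> S")
    case True
    have "\<bar>X k0\<bar> = \<bar>\<beta>\<bar> * \<bar>\<Sum>l\<in>UNIV. P k0 l * X l\<bar>"
      using True X_eq[of k0] by (simp add: abs_mult)
    also have "\<dots> \<le> \<bar>\<beta>\<bar> * (\<Sum>l\<in>UNIV. P k0 l * m)"
    proof (rule mult_left_mono)
      have "\<bar>\<Sum>l\<in>UNIV. P k0 l * X l\<bar> \<le> (\<Sum>l\<in>UNIV. \<bar>P k0 l * X l\<bar>)" by (rule sum_abs)
      also have "\<dots> \<le> (\<Sum>l\<in>UNIV. P k0 l * m)"
        using assms(1) le_m by (intro sum_mono) (auto simp: stochastic_def abs_mult intro: mult_left_mono)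
      finally show "\<bar>\<Sum>l\<in>UNIV. P k0 l * X l\<bar> \<le> (\<Sum>l\<in>UNIV. P k0 l * m)" .
    qed simp
    also have "\<dots> = \<bar>\<beta>\<bar> * m"
      using assms(1) by (simp add: stochastic_def sum_distrib_right[symmetric])
    finally show ?thesis .
  next
    case False
    then show ?thesis using X_eq[of k0] m_nonneg by simp
  qed
  then have "m = 0" using k0 m_nonneg assms(2)
    by (metis abs_ge_zero mult_le_cancel_right1 not_le order_antisym)
  then show ?thesis using le_m by (intro ext) (metis abs_le_zero_iff)
qed

lemma bellman_eq_unique:
  assumes "stochastic P" "\<bar>\<beta>\<bar> < 1" and "bellman_eq P \<beta> R S F"
  shows "F = fS P \<beta> R S"
proof -
  have "bellman_eq P \<beta> (\<lambda>_. 0) S (\<lambda>k. F k - fS P \<beta> R S k)"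
    using bellman_eq_diff[OF assms(3) bellman_eq_fS[OF assms(1,2), of R S]] by simp
  from fun_cong[OF bellman_eq_zero_reward[OF assms(1,2) this]] show ?thesis
    by auto
qed

lemma fS_minus_const:
  assumes "stochastic P" "\<bar>\<beta>\<bar> < 1"
  shows "fS P \<beta> (\<lambda>k. R k - c) S = (\<lambda>k. fS P \<beta> R S k - c * gS P \<beta> S k)"
proof -
  have "bellman_eq P \<beta> (\<lambda>k. R k - c) S (\<lambda>k. fS P \<beta> R S k - c * gS P \<beta> S k)"
    using bellman_eq_diff[OF bellman_eq_fS[OF assms, of R S]
        bellman_eq_scale[OF bellman_eq_fS[OF assms, of "\<lambda>_. 1" S], of c]]
    by (simp add: gS_def)
  from bellman_eq_unique[OF assms this] show ?thesis ..
qed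

lemma rS_minus_const:
  assumes "stochastic P" "\<bar>\<beta>\<bar> < 1"
  shows "rS P \<beta> (\<lambda>k. R k - c) S i = rS P \<beta> R S i - c * wS P \<beta> S i"
proof -
  have sum_eq: "(\<Sum>j\<in>UNIV. P i j * (fS P \<beta> R S j - c * gS P \<beta> S j)) =
      (\<Sum>j\<in>UNIV. P i j * fS P \<beta> R S j) - c * (\<Sum>j\<in>UNIV. P i j * gS P \<beta> S j)"
    by (simp add: right_diff_distrib sum_subtractf sum_distrib_left mult.left_commute)
  show ?thesis
    unfolding rS_def wS_def fS_minus_const[OF assms] sum_eq by (simp add: algebra_simps)
qed
lemma fS_insert_zero_index:
  assumes "stochastic P" "\<bar>\<beta>\<bar> < 1" "j \<notin> S" "rS P \<beta> R S j = 0"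
  shows "fS P \<beta> R (insert j S) = fS P \<beta> R S"
proof -
  have "bellman_eq P \<beta> R (insert j S) (fS P \<beta> R S)"
    using bellman_eq_fS[OF assms(1,2), of R S] assms(3,4)
    by (auto simp: bellman_eq_def rS_def)
  from bellman_eq_unique[OF assms(1,2) this] show ?thesis ..
qed

lemma gS_nonneg:
  assumes "stochastic P" "0 \<le> \<beta>" "\<beta> < 1"
  shows "0 \<le> gS P \<beta> S k"
  unfolding gS_def fS_def using assms
  by (intro suminf_nonneg summable_discounted_stay) (auto intro!: mult_nonneg_nonneg sum_nonneg stay_prob_nonneg)

lemma wS_pos:
  assumes "stochastic P" "0 \<le> \<beta>" "\<beta> < 1"
  shows "0 < wS P \<beta> S k"
proof -
  let ?g = "gS P \<beta> S"
  have g_eq: "?g k = (if k \<in> S then 1 + \<beta> * (\<Sum>l\<in>UNIV. P k l * ?g l) else 0)"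
    using bellman_eq_fS[OF assms(1), of \<beta> "\<lambda>_. 1" S] assms by (simp add: bellman_eq_def gS_def)
  have "0 \<le> \<beta> * (\<Sum>l\<in>UNIV. P k l * ?g l)"
    using assms gS_nonneg[OF assms] by (auto simp: stochastic_def intro!: sum_nonneg mult_nonneg_nonneg)
  moreover have "k \<in> S \<Longrightarrow> wS P \<beta> S k = (1 - \<beta>) * (1 + \<beta> * (\<Sum>l\<in>UNIV. P k l * ?g l))"
    unfolding wS_def using g_eq by (simp add: algebra_simps)
  ultimately show ?thesis
    using assms(3) g_eq by (cases "k \<in> S") (simp_all add: wS_def)
qed

theorem proposition5:
  fixes P :: "'a::finite \<Rightarrow> 'a \<Rightarrow> real" and \<beta> :: real and R :: "'a \<Rightarrow> real"
    and S :: "'a set" and i j :: 'a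
  assumes "stochastic P" and "0 < \<beta>" and "\<beta> < 1" and "j \<notin> S"
  shows "nuS P \<beta> R (S \<union> {j}) i =
           nuS P \<beta> R S j - wS P \<beta> S i / wS P \<beta> (S \<union> {j}) i * (nuS P \<beta> R S j - nuS P \<beta> R S i)"
proof -
  have \<beta>: "\<bar>\<beta>\<bar> < 1" using assms(2,3) by simp
  have w_pos: "0 < wS P \<beta> T k" for T k
    using wS_pos assms(1-3) by (metis less_imp_le)
  define c where "c = nuS P \<beta> R S j"
  define R' where "R' = (\<lambda>k. R k - c)"
  have "rS P \<beta> R' S j = 0"
    using w_pos[of S j] by (simp add: R'_def rS_minus_const[OF assms(1) \<beta>] c_def nuS_def)
  then have "fS P \<beta> R' (insert j S) = fS P \<beta> R' S"
    by (rule fS_insert_zero_index[OF assms(1) \<beta> assms(4)])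
  then have "rS P \<beta> R' (insert j S) i = rS P \<beta> R' S i"
    by (simp add: rS_def)
  then have "rS P \<beta> R (insert j S) i - c * wS P \<beta> (insert j S) i = rS P \<beta> R S i - c * wS P \<beta> S i"
    by (simp add: R'_def rS_minus_const[OF assms(1) \<beta>])
  then have "nuS P \<beta> R (insert j S) i = c - (c * wS P \<beta> S i - rS P \<beta> R S i) / wS P \<beta> (insert j S) i"
    using w_pos[of "insert j S" i] by (simp add: nuS_def field_simps)
  also have "\<dots> = c - wS P \<beta> S i / wS P \<beta> (insert j S) i * (c - nuS P \<beta> R S i)"
    using w_pos[of S i] w_pos[of "insert j S" i] by (simp add: nuS_def field_simps)
  finally show ?thesis
    by (simp add: c_def)
qed

end
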